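(* Fix $\alpha,s,t\in\mathbb{C}$. Let $k$ be a positive integer, $a,b\in\mathbb{Z}$ and $u\in\mathbb{C}$. For any integers $c_0=a,c_1,\dots,c_{k-1},c_k=b$ with $|c_{i+1}-c_i|=1$ for $i=0,\dots,k-1$, consider the vector $$\Pi_{1\ldots k}\,\psi^{(1)}(u+k-1)^{c_0}_{c_1}\otimes\psi^{(1)}(u+k-2)^{c_1}_{c_2}\otimes\cdots\otimes\psi^{(1)}(u+1)^{c_{k-2}}_{c_{k-1}}\otimes\psi^{(1)}(u)^{c_{k-1}}_{c_k}\in(\mathbb{C}^2)^{\otimes k}.$$ This vector does not depend on the choice of $c_1,\dots,c_{k-1}$ (subject to the stated constraint).
   Context: $\mathbb{C}^2$ has basis $e_1,e_2$; vectors are written as columns of coordinates. For integers $l$ and $u\in\mathbb{C}$ define $\psi^{(1)}(u)^l_{l+1}=\begin{pmatrix}1\\ \alpha(u-l-t)\end{pmatrix}$, $\psi^{(1)}(u)^l_{l-1}=\begin{pmatrix}1\\ \alpha(u+l+s)\end{pmatrix}$, and $\psi^{(1)}(u)^a_b=0$ if $|a-b|\neq1$. $\Pi_{1\ldots k}$ is the symmetrizer on $(\mathbb{C}^2)^{\otimes k}$: $\Pi_{1\ldots k}\,e_{i_1}\otimes\cdots\otimes e_{i_k}=\frac{1}{k!}\sum_{\sigma\in S_k}e_{i_{\sigma(1)}}\otimes\cdots\otimes e_{i_{\sigma(k)}}$. *)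

theory Defs
  imports Complex_Main "HOL-Combinatorics.Permutations"
begin

text \<open>Vectors in C^2 are pairs (x1, x2) of coordinates w.r.t. e_1, e_2.
  A tensor in (C^2)^{tensor k} is represented by its coordinate function on
  index lists of length k (False = e_1, True = e_2); value 0 off length k.\<close>

definition coord :: "complex \<times> complex \<Rightarrow> bool \<Rightarrow> complex" where
  "coord v i = (if i then snd v else fst v)"

definition psi1 :: "complex \<Rightarrow> complex \<Rightarrow> complex \<Rightarrow> complex \<Rightarrow> int \<Rightarrow> int \<Rightarrow> complex \<times> complex" where
  "psi1 \<alpha> s t u l m =
     (if m = l + 1 then (1, \<alpha> * (u - of_int l - t))
      else if m = l - 1 then (1, \<alpha> * (u + of_int l + s))
      else (0, 0))"

definition tensor_pure :: "(complex \<times> complex) list \<Rightarrow> bool list \<Rightarrow> complex" where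
  "tensor_pure vs is =
     (if length is = length vs then (\<Prod>j<length vs. coord (vs ! j) (is ! j)) else 0)"

definition symmetrizer :: "nat \<Rightarrow> (bool list \<Rightarrow> complex) \<Rightarrow> bool list \<Rightarrow> complex" where
  "symmetrizer k T is =
     (if length is = k then
        (1 / of_nat (fact k)) * (\<Sum>\<sigma>\<in>{\<sigma>. \<sigma> permutes {0..<k}}. T (map (\<lambda>j. is ! \<sigma> j) [0..<k]))
      else 0)"

definition fused_vector :: "complex \<Rightarrow> complex \<Rightarrow> complex \<Rightarrow> nat \<Rightarrow> complex \<Rightarrow> (nat \<Rightarrow> int) \<Rightarrow> bool list \<Rightarrow> complex" where
  "fused_vector \<alpha> s t k u c =
     symmetrizer k (tensor_pure (map (\<lambda>j. psi1 \<alpha> s t (u + of_nat (k - 1 - j)) (c j) (c (Suc j))) [0..<k]))"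

definition admissible_path :: "nat \<Rightarrow> int \<Rightarrow> int \<Rightarrow> (nat \<Rightarrow> int) \<Rightarrow> bool" where
  "admissible_path k a b c \<longleftrightarrow> c 0 = a \<and> c k = b \<and> (\<forall>i<k. \<bar>c (Suc i) - c i\<bar> = 1)"

end

theory Submission
  imports Defs
begin

text \<open>Along a path with \<open>U\<close> up-steps and \<open>D\<close> down-steps so far, the height is
  \<open>c\<^sub>0 + U - D\<close> and the spectral parameter has dropped by \<open>U + D\<close>. So the next up-step
  contributes \<open>(1, \<alpha>(z - c\<^sub>0 - t - 2U))\<close> and the next down-step \<open>(1, \<alpha>(z + c\<^sub>0 + s - 2D))\<close>,
  where \<open>z\<close> is the initial spectral parameter. Hence the multiset of tensor factors depends
  only on the numbers of up- and down-steps, i.e. on the endpoints, and the symmetrizer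
  sees only this multiset.\<close>

lemma symmetrizer_tensor_pure_permute_list:
  assumes p: "p permutes {..<k}" and len: "length vs = k"
  shows "symmetrizer k (tensor_pure (permute_list p vs)) = symmetrizer k (tensor_pure vs)"
proof
  fix "is" :: "bool list"
  show "symmetrizer k (tensor_pure (permute_list p vs)) is = symmetrizer k (tensor_pure vs) is"
  proof (cases "length is = k")
    case False
    then show ?thesis by (simp add: symmetrizer_def)
  next
    case True
    let ?S = "{\<sigma>. \<sigma> permutes {0..<k}}"
    have p_inv: "inv p permutes {0..<k}"
      using p by (simp add: permutes_inv lessThan_atLeast0)
    have p_less: "j < k \<Longrightarrow> p j < k" for j
      using p by (auto dest: permutes_in_image)
    have reindex: "(\<Prod>j<k. coord (vs ! j) (is ! \<sigma> (inv p j))) = (\<Prod>j<k. coord (vs ! p j) (is ! \<sigma> j))"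
      for \<sigma> :: "nat \<Rightarrow> nat"
      using prod.permute[OF p, of "\<lambda>j. coord (vs ! j) (is ! \<sigma> (inv p j))"]
      by (simp add: permutes_inverses(2)[OF p])
    have "(\<Sum>\<sigma>\<in>?S. tensor_pure (permute_list p vs) (map (\<lambda>j. is ! \<sigma> j) [0..<k]))
        = (\<Sum>\<sigma>\<in>?S. \<Prod>j<k. coord (vs ! p j) (is ! \<sigma> j))"
      by (rule sum.cong) (auto simp: tensor_pure_def permute_list_def len p_less intro!: prod.cong)
    also have "\<dots> = (\<Sum>\<sigma>\<in>?S. \<Prod>j<k. coord (vs ! j) (is ! \<sigma> (inv p j)))"
      by (simp add: reindex)
    also have "\<dots> = (\<Sum>\<sigma>\<in>?S. \<Prod>j<k. coord (vs ! j) (is ! \<sigma> j))"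
      using sum_permutations_compose_right[OF p_inv, of "\<lambda>\<sigma>. \<Prod>j<k. coord (vs ! j) (is ! \<sigma> j)"]
      by simp
    also have "\<dots> = (\<Sum>\<sigma>\<in>?S. tensor_pure vs (map (\<lambda>j. is ! \<sigma> j) [0..<k]))"
      by (rule sum.cong) (auto simp: tensor_pure_def len intro!: prod.cong)
    finally show ?thesis
      using True by (simp add: symmetrizer_def)
  qed
qed

lemma symmetrizer_tensor_pure_mset_eq:
  assumes "mset vs = mset ws" and "length vs = k"
  shows "symmetrizer k (tensor_pure vs) = symmetrizer k (tensor_pure ws)"
proof -
  obtain p where p: "p permutes {..<length ws}" "permute_list p ws = vs"
    using mset_eq_permutation[OF assms(1)] by blast
  have "length ws = k"
    using assms by (metis size_mset)
  then show ?thesis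
    using symmetrizer_tensor_pure_permute_list[of p k ws] p by simp
qed

definition path_factors :: "complex \<Rightarrow> complex \<Rightarrow> complex \<Rightarrow> complex \<Rightarrow> (nat \<Rightarrow> int) \<Rightarrow> nat \<Rightarrow> (complex \<times> complex) list" where
  "path_factors \<alpha> s t z c n = map (\<lambda>j. psi1 \<alpha> s t (z - of_nat j) (c j) (c (Suc j))) [0..<n]"

lemma mset_path_factors_up_down:
  assumes steps: "\<forall>i<n. \<bar>c (Suc i) - c i\<bar> = 1"
  shows "\<exists>U D. U + D = n \<and> int U - int D = c n - c 0 \<and>
     mset (path_factors \<alpha> s t z c n)
       = mset (map (\<lambda>i. (1, \<alpha> * (z - of_int (c 0) - t - 2 * of_nat i))) [0..<U])
       + mset (map (\<lambda>i. (1, \<alpha> * (z + of_int (c 0) + s - 2 * of_nat i))) [0..<D])"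
  using steps
proof (induction n)
  case 0
  show ?case by (simp add: path_factors_def)
next
  case (Suc n)
  then obtain U D where UD: "U + D = n" "int U - int D = c n - c 0"
    and M: "mset (path_factors \<alpha> s t z c n)
       = mset (map (\<lambda>i. (1, \<alpha> * (z - of_int (c 0) - t - 2 * of_nat i))) [0..<U])
       + mset (map (\<lambda>i. (1, \<alpha> * (z + of_int (c 0) + s - 2 * of_nat i))) [0..<D])"
    by auto
  have n_eq: "(of_nat n :: complex) = of_nat U + of_nat D"
    using UD(1) by (metis of_nat_add)
  have height: "(of_int (c n) :: complex) = of_int (c 0) + of_nat U - of_nat D"
  proof -
    have "c n = c 0 + int U - int D"
      using UD(2) by simp
    then show ?thesis
      by simp
  qed
  have snoc: "mset (path_factors \<alpha> s t z c (Suc n))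
      = mset (path_factors \<alpha> s t z c n) + {# psi1 \<alpha> s t (z - of_nat n) (c n) (c (Suc n)) #}"
    by (simp add: path_factors_def)
  have "c (Suc n) = c n + 1 \<or> c (Suc n) = c n - 1"
    using Suc.prems by fastforce
  then show ?case
  proof
    assume up: "c (Suc n) = c n + 1"
    have step: "psi1 \<alpha> s t (z - of_nat n) (c n) (c (Suc n))
        = (1, \<alpha> * (z - of_int (c 0) - t - 2 * of_nat U))"
      using up by (simp add: psi1_def n_eq height algebra_simps)
    show ?case
      by (rule exI[of _ "Suc U"], rule exI[of _ D]) (use UD up M snoc step in \<open>simp add: algebra_simps\<close>)
  next
    assume down: "c (Suc n) = c n - 1"
    have step: "psi1 \<alpha> s t (z - of_nat n) (c n) (c (Suc n))
        = (1, \<alpha> * (z + of_int (c 0) + s - 2 * of_nat D))"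
      using down by (simp add: psi1_def n_eq height algebra_simps)
    show ?case
      by (rule exI[of _ U], rule exI[of _ "Suc D"]) (use UD down M snoc step in \<open>simp add: algebra_simps\<close>)
  qed
qed

lemma mset_path_factors_eq_if_same_endpoints:
  assumes "\<forall>i<n. \<bar>c (Suc i) - c i\<bar> = 1" and "\<forall>i<n. \<bar>c' (Suc i) - c' i\<bar> = 1"
    and "c 0 = c' 0" and "c n = c' n"
  shows "mset (path_factors \<alpha> s t z c n) = mset (path_factors \<alpha> s t z c' n)"
proof -
  obtain U D where "U + D = n" "int U - int D = c n - c 0"
    and c_factors: "mset (path_factors \<alpha> s t z c n)
       = mset (map (\<lambda>i. (1, \<alpha> * (z - of_int (c 0) - t - 2 * of_nat i))) [0..<U])
       + mset (map (\<lambda>i. (1, \<alpha> * (z + of_int (c 0) + s - 2 * of_nat i))) [0..<D])"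
    using mset_path_factors_up_down[OF assms(1)] by blast
  moreover obtain U' D' where "U' + D' = n" "int U' - int D' = c' n - c' 0"
    and c'_factors: "mset (path_factors \<alpha> s t z c' n)
       = mset (map (\<lambda>i. (1, \<alpha> * (z - of_int (c' 0) - t - 2 * of_nat i))) [0..<U'])
       + mset (map (\<lambda>i. (1, \<alpha> * (z + of_int (c' 0) + s - 2 * of_nat i))) [0..<D'])"
    using mset_path_factors_up_down[OF assms(2)] by blast
  ultimately have "U = U'" "D = D'"
    using assms(3,4) by linarith+
  then show ?thesis
    using c_factors c'_factors assms(3) by simp
qed

lemma fused_vector_eq_symmetrizer_path_factors:
  "fused_vector \<alpha> s t k u c = symmetrizer k (tensor_pure (path_factors \<alpha> s t (u + of_nat (k - 1)) c k))"
  unfolding fused_vector_def path_factors_def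
  by (rule arg_cong[where f = "\<lambda>vs. symmetrizer k (tensor_pure vs)"]) (auto simp: of_nat_diff algebra_simps)

theorem proposition4:
  fixes \<alpha> s t u :: complex and k :: nat and a b :: int and c c' :: "nat \<Rightarrow> int"
  assumes "k > 0"
    and "admissible_path k a b c"
    and "admissible_path k a b c'"
  shows "fused_vector \<alpha> s t k u c = fused_vector \<alpha> s t k u c'"
proof -
  let ?z = "u + of_nat (k - 1)"
  have "mset (path_factors \<alpha> s t ?z c k) = mset (path_factors \<alpha> s t ?z c' k)"
    using assms(2,3) unfolding admissible_path_def
    by (intro mset_path_factors_eq_if_same_endpoints) auto
  then have "symmetrizer k (tensor_pure (path_factors \<alpha> s t ?z c k))
      = symmetrizer k (tensor_pure (path_factors \<alpha> s t ?z c' k))"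
    by (rule symmetrizer_tensor_pure_mset_eq) (simp add: path_factors_def)
  then show ?thesis
    by (simp add: fused_vector_eq_symmetrizer_path_factors)
qed

end
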